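(* Let $n\ge5$ be odd and $M$ an $n\times n$ HW-matrix. There is no spin$^c$ set $S$ for $M$ with $|S|=n-2$.
   Context: $\mathcal S=\{0,1,2,3\}$ is the Klein four-group ($\mathbb Z_2$-vector space) with $x+x=0$, $1+2=3$, $1+3=2$, $2+3=1$. $\mathcal P_n$ is the power set of $\{1,\dots,n\}$ (addition = symmetric difference, product = intersection); $|U|_2=|U|\bmod 2$; $J_M(U)=\{j:\sum_{i\in U}M_{ij}=1\}$. $M$ is an HW-matrix if it has $1$ on the diagonal and $2$ or $3$ off the diagonal, all column sums are $0$, and $J_M(U)\ne\emptyset$ for all $U\ne\emptyset,\{1,\dots,n\}$. $S\in\mathcal P_n$ is a spin$^c$ set for $M$ if $|(J_M(U)+U)\cap S|_2=\binom{|U|}2\bmod 2$ for all $U\in\mathcal P_n$. *)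

theory Defs
  imports Main
begin

text \<open>The Klein four-group S = {0,1,2,3} is modelled by natural numbers 0..3 with
  addition given by bitwise exclusive or (so x+x=0, 1+2=3, 1+3=2, 2+3=1).
  Matrices are functions nat => nat => nat, indexed by {1..n}.\<close>

definition kadd :: "nat \<Rightarrow> nat \<Rightarrow> nat" where
  "kadd x y = xor x y"

definition ksum :: "(nat \<Rightarrow> nat \<Rightarrow> nat) \<Rightarrow> nat set \<Rightarrow> nat \<Rightarrow> nat" where
  "ksum M U j = Finite_Set.fold (\<lambda>i acc. kadd (M i j) acc) 0 U"

definition JM :: "nat \<Rightarrow> (nat \<Rightarrow> nat \<Rightarrow> nat) \<Rightarrow> nat set \<Rightarrow> nat set" where
  "JM n M U = {j \<in> {1..n}. ksum M U j = 1}"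

definition HW_matrix :: "nat \<Rightarrow> (nat \<Rightarrow> nat \<Rightarrow> nat) \<Rightarrow> bool" where
  "HW_matrix n M \<longleftrightarrow>
     (\<forall>i\<in>{1..n}. M i i = 1) \<and>
     (\<forall>i\<in>{1..n}. \<forall>j\<in>{1..n}. i \<noteq> j \<longrightarrow> M i j \<in> {2, 3}) \<and>
     (\<forall>j\<in>{1..n}. ksum M {1..n} j = 0) \<and>
     (\<forall>U. U \<subseteq> {1..n} \<longrightarrow> U \<noteq> {} \<longrightarrow> U \<noteq> {1..n} \<longrightarrow> JM n M U \<noteq> {})"

definition symdiff :: "'a set \<Rightarrow> 'a set \<Rightarrow> 'a set" where
  "symdiff A B = (A - B) \<union> (B - A)"

definition spinc_set :: "nat \<Rightarrow> (nat \<Rightarrow> nat \<Rightarrow> nat) \<Rightarrow> nat set \<Rightarrow> bool" where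
  "spinc_set n M S \<longleftrightarrow> S \<subseteq> {1..n} \<and>
     (\<forall>U. U \<subseteq> {1..n} \<longrightarrow>
        card (symdiff (JM n M U) U \<inter> S) mod 2 = (card U choose 2) mod 2)"

end

theory Submission
  imports Defs
begin

text \<open>Let \<open>S\<close> be a spin^c set and write \<open>e i j\<close> for the bit telling the off-diagonal
  entries 2 and 3 apart. For \<open>U = {i, k} \<subseteq> S\<close> the spin^c condition says that rows \<open>i\<close>
  and \<open>k\<close> differ in an odd number of columns of \<open>S - {i, k}\<close>; for \<open>|U| = 3\<close> the condition
  \<open>J\<^sub>M(U) \<noteq> {}\<close> says that some two of the three rows agree in the column of the third.
  Orienting \<open>i \<rightarrow> k\<close> when \<open>e i k\<close> differs from the parity of the number of ones in row \<open>k\<close>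
  turns the first property into a tournament on \<open>S\<close> and the second into the absence of
  directed 3-cycles, and all out-degrees acquire the parity of the total number of ones.
  But the out-degrees of a transitive tournament are \<open>0, 1, \<dots>, |S| - 1\<close>, so \<open>|S| \<le> 1\<close>.\<close>

lemma card_filter_insert:
  assumes "finite A" "k \<notin> A"
  shows "card {j\<in>insert k A. P j} = of_bool (P k) + card {j\<in>A. P j}"
proof -
  have "{j\<in>insert k A. P j} = (if P k then insert k {j\<in>A. P j} else {j\<in>A. P j})" by auto
  then show ?thesis using assms by simp
qed

lemma even_card_filter_neq_iff:
  assumes "finite A"
  shows "even (card {j\<in>A. P j \<noteq> Q j}) \<longleftrightarrow> (even (card {j\<in>A. P j}) \<longleftrightarrow> even (card {j\<in>A. Q j}))"
  using assms
proof (induction rule: finite_induct)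
  case (insert x F)
  then show ?case by (simp only: card_filter_insert[OF insert(1,2)]) auto
qed simp

lemma transitive_tournament_outdegree_parity:
  fixes g :: "'a \<Rightarrow> 'a \<Rightarrow> bool"
  assumes "finite S"
    and tournament: "\<And>i k. i \<in> S \<Longrightarrow> k \<in> S \<Longrightarrow> i \<noteq> k \<Longrightarrow> g i k \<noteq> g k i"
    and no_3_cycle: "\<And>i k l. i \<in> S \<Longrightarrow> k \<in> S \<Longrightarrow> l \<in> S \<Longrightarrow> i \<noteq> k \<Longrightarrow> i \<noteq> l \<Longrightarrow> k \<noteq> l \<Longrightarrow>
        g i k \<Longrightarrow> g k l \<Longrightarrow> \<not> g l i"
    and "a \<in> S" "b \<in> S" "a \<noteq> b"
  shows "\<exists>i\<in>S. \<exists>k\<in>S. even (card {l\<in>S - {i}. g i l}) \<noteq> even (card {l\<in>S - {k}. g k l})"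
proof (rule ccontr)
  define N where "N x = {l\<in>S - {x}. g x l}" for x
  assume "\<not> ?thesis"
  then have same_parity: "even (card (N i)) = even (card (N k))" if "i \<in> S" "k \<in> S" for i k
    using that unfolding N_def by blast
  have finite_N: "finite (N x)" for x
    unfolding N_def using \<open>finite S\<close> by simp
  have N_psubset: "N x \<subset> N y" if "x \<in> S" "y \<in> S" "x \<noteq> y" "g y x" for x y
  proof -
    have "l \<in> N y" if "l \<in> N x" for l
    proof -
      from that have l: "l \<in> S" "l \<noteq> x" "g x l" unfolding N_def by auto
      with \<open>g y x\<close> tournament[of x y] \<open>x \<in> S\<close> \<open>y \<in> S\<close> \<open>x \<noteq> y\<close> have "l \<noteq> y" by auto
      with l no_3_cycle[of y x l] tournament[of l y] \<open>x \<in> S\<close> \<open>y \<in> S\<close> \<open>x \<noteq> y\<close> \<open>g y x\<close>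
      show ?thesis unfolding N_def by auto
    qed
    moreover have "x \<in> N y" "x \<notin> N x" using that unfolding N_def by auto
    ultimately show ?thesis by blast
  qed
  \<comment> \<open>Among arcs \<open>i \<rightarrow> k\<close> with minimal gap \<open>|N i| - |N k|\<close>, equal parity leaves room for
      a vertex strictly between \<open>i\<close> and \<open>k\<close>.\<close>
  define arcs where "arcs = {(i, k). i \<in> S \<and> k \<in> S \<and> i \<noteq> k \<and> g i k}"
  define gap where "gap = (\<lambda>(i, k). card (N i) - card (N k))"
  have "(a, b) \<in> arcs \<or> (b, a) \<in> arcs"
    using tournament[of a b] assms(4-6) unfolding arcs_def by auto
  then obtain p where "p \<in> arcs" and p_min: "\<And>q. q \<in> arcs \<Longrightarrow> gap p \<le> gap q"
    using ex_has_least_nat[of "\<lambda>p. p \<in> arcs" _ gap] by blast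
  then obtain i k where ik: "p = (i, k)" "i \<in> S" "k \<in> S" "i \<noteq> k" "g i k"
    unfolding arcs_def by auto
  have "N k \<subset> N i" using N_psubset ik by blast
  moreover have "even (card (N k)) = even (card (N i))" using same_parity ik by blast
  moreover have "card (N k) < card (N i)" using \<open>N k \<subset> N i\<close> psubset_card_mono finite_N by blast
  ultimately have "card (N k) + 2 \<le> card (N i)" by presburger
  then have "card (N i - N k) \<ge> 2"
    using card_Diff_subset[OF finite_N] \<open>N k \<subset> N i\<close> by (simp add: less_imp_le)
  then have "N i - N k \<noteq> {k}" by auto
  moreover have "N i - N k \<noteq> {}"
    using \<open>card (N i - N k) \<ge> 2\<close> by (metis card.empty not_numeral_le_zero)
  ultimately obtain l where "l \<in> N i - N k" "l \<noteq> k" by blast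
  then have l: "l \<in> S" "l \<noteq> i" "l \<noteq> k" "g i l" "g l k"
    using tournament[of k l] ik unfolding N_def by auto
  have "N k \<subset> N l" "N l \<subset> N i" using N_psubset l ik by blast+
  then have "card (N k) < card (N l)" "card (N l) < card (N i)"
    using psubset_card_mono finite_N by blast+
  then have "gap (i, l) < gap p" unfolding gap_def ik(1) by simp
  moreover have "(i, l) \<in> arcs" using l ik unfolding arcs_def by auto
  ultimately show False using p_min[of "(i, l)"] by simp
qed

lemma odd_row_differences_card_le_1:
  fixes e :: "'a \<Rightarrow> 'a \<Rightarrow> bool"
  assumes "finite S"
    and odd_differences: "\<And>i k. i \<in> S \<Longrightarrow> k \<in> S \<Longrightarrow> i \<noteq> k \<Longrightarrow> odd (card {j\<in>S - {i, k}. e i j \<noteq> e k j})"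
    and coincidence: "\<And>i k l. i \<in> S \<Longrightarrow> k \<in> S \<Longrightarrow> l \<in> S \<Longrightarrow> i \<noteq> k \<Longrightarrow> i \<noteq> l \<Longrightarrow> k \<noteq> l \<Longrightarrow>
        e k i = e l i \<or> e i k = e l k \<or> e i l = e k l"
  shows "card S \<le> 1"
proof (rule ccontr)
  assume "\<not> card S \<le> 1"
  then obtain a b where ab: "a \<in> S" "b \<in> S" "a \<noteq> b"
    using card_le_Suc0_iff_eq[OF \<open>finite S\<close>] by auto
  define w where "w i = card {j\<in>S - {i}. e i j}" for i
  define g where "g i k = (e i k \<noteq> odd (w k))" for i k
  have tournament: "g i k \<noteq> g k i" if "i \<in> S" "k \<in> S" "i \<noteq> k" for i k
  proof -
    have S_i: "S - {i} = insert k (S - {i, k})" and S_k: "S - {k} = insert i (S - {i, k})"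
      using that by auto
    have "w i = of_bool (e i k) + card {j\<in>S - {i, k}. e i j}"
      unfolding w_def S_i by (rule card_filter_insert) (use \<open>finite S\<close> in auto)
    moreover have "w k = of_bool (e k i) + card {j\<in>S - {i, k}. e k j}"
      unfolding w_def S_k by (rule card_filter_insert) (use \<open>finite S\<close> in auto)
    ultimately show ?thesis
      using odd_differences[OF that] even_card_filter_neq_iff[of "S - {i, k}" "e i" "e k"] \<open>finite S\<close>
      unfolding g_def by auto
  qed
  have no_3_cycle: "\<not> g l i" if "i \<in> S" "k \<in> S" "l \<in> S" "i \<noteq> k" "i \<noteq> l" "k \<noteq> l" "g i k" "g k l" for i k l
  proof
    assume "g l i"
    have "\<not> g k i" "\<not> g l k" "\<not> g i l"
      using tournament that \<open>g l i\<close> by blast+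
    with that \<open>g l i\<close> have "e i k \<noteq> e l k" "e k l \<noteq> e i l" "e l i \<noteq> e k i"
      unfolding g_def by auto
    then show False using coincidence[OF that(1-6)] by auto
  qed
  have outdegree_parity: "even (card {l\<in>S - {i}. g i l}) \<longleftrightarrow> even (sum w S)" if "i \<in> S" for i
  proof -
    have "even (card {l\<in>S - {i}. g i l}) \<longleftrightarrow> (even (w i) \<longleftrightarrow> even (card {l\<in>S - {i}. odd (w l)}))"
      unfolding g_def w_def[of i] using \<open>finite S\<close> by (intro even_card_filter_neq_iff) simp
    also have "\<dots> \<longleftrightarrow> even (w i + sum w (S - {i}))"
      using even_sum_iff[of "S - {i}" w] \<open>finite S\<close> by simp
    also have "w i + sum w (S - {i}) = sum w S"
      by (rule sum.remove[OF \<open>finite S\<close> that, symmetric])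
    finally show ?thesis .
  qed
  have "\<exists>i\<in>S. \<exists>k\<in>S. even (card {l\<in>S - {i}. g i l}) \<noteq> even (card {l\<in>S - {k}. g k l})"
    by (rule transitive_tournament_outdegree_parity[OF \<open>finite S\<close> tournament no_3_cycle ab])
  then obtain i k where "i \<in> S" "k \<in> S" "even (card {l\<in>S - {i}. g i l}) \<noteq> even (card {l\<in>S - {k}. g k l})"
    by (elim bexE)
  then show False unfolding outdegree_parity[OF \<open>i \<in> S\<close>] outdegree_parity[OF \<open>k \<in> S\<close>] by simp
qed

lemma comp_fun_commute_kadd_column: "comp_fun_commute (\<lambda>i. kadd (M i j))"
  by unfold_locales (auto simp: kadd_def fun_eq_iff xor.left_commute)

lemma ksum_empty [simp]: "ksum M {} j = 0"
  by (simp add: ksum_def)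

lemma ksum_insert [simp]:
  "finite U \<Longrightarrow> i \<notin> U \<Longrightarrow> ksum M (insert i U) j = xor (M i j) (ksum M U j)"
proof -
  assume "finite U" "i \<notin> U"
  interpret comp_fun_commute "\<lambda>i. kadd (M i j)" by (rule comp_fun_commute_kadd_column)
  show ?thesis unfolding ksum_def using \<open>finite U\<close> \<open>i \<notin> U\<close> by (simp add: kadd_def)
qed

lemma xor_pair_eq_1_iff:
  "(a::nat) \<in> {2, 3} \<Longrightarrow> b \<in> {2, 3} \<Longrightarrow> xor a b = 1 \<longleftrightarrow> a \<noteq> b"
  "(a::nat) \<in> {2, 3} \<Longrightarrow> xor 1 a \<noteq> 1"
  by auto

lemma xor_triple_eq_1_iff:
  "(a::nat) \<in> {2, 3} \<Longrightarrow> b \<in> {2, 3} \<Longrightarrow> c \<in> {2, 3} \<Longrightarrow> xor a (xor b c) \<noteq> 1"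
  "(a::nat) \<in> {2, 3} \<Longrightarrow> b \<in> {2, 3} \<Longrightarrow> xor 1 (xor a b) = 1 \<longleftrightarrow> a = b"
  by auto

lemma HW_matrix_diag: "HW_matrix n M \<Longrightarrow> i \<in> {1..n} \<Longrightarrow> M i i = 1"
  unfolding HW_matrix_def by blast

lemma HW_matrix_offdiag:
  "HW_matrix n M \<Longrightarrow> i \<in> {1..n} \<Longrightarrow> j \<in> {1..n} \<Longrightarrow> i \<noteq> j \<Longrightarrow> M i j \<in> {2, 3}"
  unfolding HW_matrix_def by blast

lemma HW_matrix_JM_pair:
  assumes HW: "HW_matrix n M" and "i \<in> {1..n}" "k \<in> {1..n}" "i \<noteq> k"
  shows "JM n M {i, k} = {j\<in>{1..n} - {i, k}. M i j \<noteq> M k j}"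
proof -
  have "xor (M i j) (M k j) = 1 \<longleftrightarrow> j \<notin> {i, k} \<and> M i j \<noteq> M k j" if "j \<in> {1..n}" for j
  proof (cases "j \<in> {i, k}")
    case True
    then show ?thesis
      using HW_matrix_diag[OF HW] HW_matrix_offdiag[OF HW] xor_pair_eq_1_iff(2) xor.commute assms(2-4) that
      by fastforce
  next
    case False
    then show ?thesis using HW_matrix_offdiag[OF HW] xor_pair_eq_1_iff(1) assms(2,3) that by auto
  qed
  then show ?thesis unfolding JM_def using assms(4) by auto
qed

lemma HW_matrix_JM_nonempty:
  "HW_matrix n M \<Longrightarrow> U \<subseteq> {1..n} \<Longrightarrow> U \<noteq> {} \<Longrightarrow> U \<noteq> {1..n} \<Longrightarrow> JM n M U \<noteq> {}"
  unfolding HW_matrix_def by blast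

lemma HW_matrix_triple_coincidence:
  assumes HW: "HW_matrix n M" and "n \<noteq> 3"
    and i: "i \<in> {1..n}" and k: "k \<in> {1..n}" and l: "l \<in> {1..n}"
    and "i \<noteq> k" "i \<noteq> l" "k \<noteq> l"
  shows "M k i = M l i \<or> M i k = M l k \<or> M i l = M k l"
proof -
  have "card {i, k, l} = 3" using \<open>i \<noteq> k\<close> \<open>i \<noteq> l\<close> \<open>k \<noteq> l\<close> by simp
  then have "{i, k, l} \<noteq> {1..n}" using \<open>n \<noteq> 3\<close> by auto
  then have "JM n M {i, k, l} \<noteq> {}" using HW_matrix_JM_nonempty[OF HW] i k l by simp
  then obtain j where j: "j \<in> {1..n}" "ksum M {i, k, l} j = 1" unfolding JM_def by auto
  then have sum: "xor (M i j) (xor (M k j) (M l j)) = 1"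
    using \<open>i \<noteq> k\<close> \<open>i \<noteq> l\<close> \<open>k \<noteq> l\<close> by simp
  consider "j = i" | "j = k" | "j = l" | "j \<notin> {i, k, l}" by blast
  then show ?thesis
  proof cases
    case 1
    with sum have "xor 1 (xor (M k i) (M l i)) = 1" using HW_matrix_diag[OF HW i] by simp
    then have "M k i = M l i"
      using xor_triple_eq_1_iff(2) HW_matrix_offdiag[OF HW k i] HW_matrix_offdiag[OF HW l i] \<open>i \<noteq> k\<close> \<open>i \<noteq> l\<close>
      by auto
    then show ?thesis by simp
  next
    case 2
    with sum have "xor 1 (xor (M i k) (M l k)) = 1" using HW_matrix_diag[OF HW k] by (simp add: ac_simps)
    then have "M i k = M l k"
      using xor_triple_eq_1_iff(2) HW_matrix_offdiag[OF HW i k] HW_matrix_offdiag[OF HW l k] \<open>i \<noteq> k\<close> \<open>k \<noteq> l\<close>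
      by auto
    then show ?thesis by simp
  next
    case 3
    with sum have "xor 1 (xor (M i l) (M k l)) = 1" using HW_matrix_diag[OF HW l] by (simp add: ac_simps)
    then have "M i l = M k l"
      using xor_triple_eq_1_iff(2) HW_matrix_offdiag[OF HW i l] HW_matrix_offdiag[OF HW k l] \<open>i \<noteq> l\<close> \<open>k \<noteq> l\<close>
      by auto
    then show ?thesis by simp
  next
    case 4
    then have False
      using sum xor_triple_eq_1_iff(1) HW_matrix_offdiag[OF HW i j(1)] HW_matrix_offdiag[OF HW k j(1)]
        HW_matrix_offdiag[OF HW l j(1)]
      by auto
    then show ?thesis ..
  qed
qed

lemma spinc_set_subset: "spinc_set n M S \<Longrightarrow> S \<subseteq> {1..n}"
  unfolding spinc_set_def by blast

lemma spinc_setD: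
  assumes "spinc_set n M S" "U \<subseteq> {1..n}"
  shows "card (symdiff (JM n M U) U \<inter> S) mod 2 = (card U choose 2) mod 2"
  using assms unfolding spinc_set_def by simp

lemma spinc_set_pair_odd:
  assumes "HW_matrix n M" "spinc_set n M S" "i \<in> S" "k \<in> S" "i \<noteq> k"
  shows "odd (card {j\<in>S - {i, k}. M i j \<noteq> M k j})"
proof -
  have "S \<subseteq> {1..n}" using spinc_set_subset[OF assms(2)] .
  with assms(3,4) have ik: "i \<in> {1..n}" "k \<in> {1..n}" by auto
  have "symdiff (JM n M {i, k}) {i, k} \<inter> S = insert i (insert k {j\<in>S - {i, k}. M i j \<noteq> M k j})"
    using \<open>S \<subseteq> {1..n}\<close> assms(3,4)
    unfolding symdiff_def HW_matrix_JM_pair[OF assms(1) ik assms(5)] by blast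
  moreover have "finite S" using \<open>S \<subseteq> {1..n}\<close> finite_subset by blast
  ultimately have "card (symdiff (JM n M {i, k}) {i, k} \<inter> S) = card {j\<in>S - {i, k}. M i j \<noteq> M k j} + 2"
    using assms(5) by simp
  moreover have "card (symdiff (JM n M {i, k}) {i, k} \<inter> S) mod 2 = (card {i, k} choose 2) mod 2"
    using spinc_setD[OF assms(2)] ik by simp
  moreover have "card {i, k} = 2" using assms(5) by simp
  ultimately show ?thesis by (simp add: odd_iff_mod_2_eq_one)
qed

lemma spinc_set_card_le_1:
  assumes HW: "HW_matrix n M" and "n \<noteq> 3" and S: "spinc_set n M S"
  shows "card S \<le> 1"
proof -
  have in_range: "\<And>x. x \<in> S \<Longrightarrow> x \<in> {1..n}" using spinc_set_subset[OF S] by blast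
  have same_entry_iff: "M i j = M k j \<longleftrightarrow> (M i j = 3) = (M k j = 3)"
    if "i \<in> S" "k \<in> S" "j \<in> S" "i \<noteq> j" "k \<noteq> j" for i k j
  proof -
    have "M i j \<in> {2, 3}" "M k j \<in> {2, 3}"
      using HW_matrix_offdiag[OF HW in_range in_range] that by blast+
    then show ?thesis by auto
  qed
  show ?thesis
  proof (rule odd_row_differences_card_le_1[where e = "\<lambda>i j. M i j = 3"])
    show "finite S" using spinc_set_subset[OF S] finite_subset by blast
    show "odd (card {j\<in>S - {i, k}. (M i j = 3) \<noteq> (M k j = 3)})" if "i \<in> S" "k \<in> S" "i \<noteq> k" for i k
    proof -
      have "{j\<in>S - {i, k}. (M i j = 3) \<noteq> (M k j = 3)} = {j\<in>S - {i, k}. M i j \<noteq> M k j}"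
        using same_entry_iff that by blast
      then show ?thesis using spinc_set_pair_odd[OF HW S that] by simp
    qed
    show "(M k i = 3) = (M l i = 3) \<or> (M i k = 3) = (M l k = 3) \<or> (M i l = 3) = (M k l = 3)"
      if "i \<in> S" "k \<in> S" "l \<in> S" "i \<noteq> k" "i \<noteq> l" "k \<noteq> l" for i k l
    proof -
      have "M k i = M l i \<or> M i k = M l k \<or> M i l = M k l"
        using HW_matrix_triple_coincidence[OF HW \<open>n \<noteq> 3\<close> in_range in_range in_range] that by simp
      then show ?thesis using same_entry_iff that by metis
    qed
  qed
qed

theorem mainTheorem17:
  fixes n :: nat and M :: "nat \<Rightarrow> nat \<Rightarrow> nat"
  assumes "odd n" and "n \<ge> 5" and "HW_matrix n M"
  shows "\<not> (\<exists>S. spinc_set n M S \<and> card S = n - 2)"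
proof
  assume "\<exists>S. spinc_set n M S \<and> card S = n - 2"
  then obtain S where S: "spinc_set n M S" "card S = n - 2" by blast
  have "n \<noteq> 3" using \<open>n \<ge> 5\<close> by simp
  then have "card S \<le> 1" using spinc_set_card_le_1[OF \<open>HW_matrix n M\<close> _ S(1)] by blast
  with S(2) \<open>n \<ge> 5\<close> show False by simp
qed

end
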